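(* Let $G_0$ be the group of homeomorphisms of $\mathbb{R}$ defined in the context. Then $G_0'=G_0''$.
   Context: $G_0$ is the group of homeomorphisms of $\mathbb{R}$ generated by the following maps: - $a(t)=t+1$; - $b$, where $b(t)=t$ for $t\le 0$, $b(t)=t/(1-t)$ for $0\le t\le 1/2$, $b(t)=(3t-1)/t$ for $1/2\le t\le 1$, and $b(t)=t+1$ for $t\ge 1$; - $c$, where $c(t)=2t/(t+1)$ for $0\le t\le 1$ and $c(t)=t$ otherwise. $G_0'$ is the commutator subgroup and $G_0''=(G_0')'$. *)

theory Defs
  imports "HOL-Analysis.Analysis" "HOL-Algebra.Algebra"
begin

definition gen_a :: "real \<Rightarrow> real" where
  "gen_a t = t + 1"

definition gen_b :: "real \<Rightarrow> real" where
  "gen_b t = (if t \<le> 0 then t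
              else if t \<le> 1/2 then t / (1 - t)
              else if t \<le> 1 then (3*t - 1) / t
              else t + 1)"

definition gen_c :: "real \<Rightarrow> real" where
  "gen_c t = (if 0 \<le> t \<and> t \<le> 1 then 2*t / (t + 1) else t)"

text \<open>The ambient group: all bijections of the real line under composition
  (the group of homeomorphisms of R is a subgroup, and the subgroup generated by
  a, b, c is the same in either ambient group).\<close>
abbreviation PermR :: "(real \<Rightarrow> real) monoid" where
  "PermR \<equiv> BijGroup (UNIV :: real set)"

definition G0 :: "(real \<Rightarrow> real) set" where
  "G0 = generate PermR {gen_a, gen_b, gen_c}"

end

theory Submission
  imports Defs
begin

text \<open>If \<open>g\<close> and \<open>h\<close> are supported in a bounded interval and \<open>f\<close>, \<open>k\<close> are translations
  pushing that interval far enough to the right, then \<open>f g f\<inverse>\<close> commutes with \<open>h\<close> and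
  \<open>k h k\<inverse>\<close> commutes with \<open>[g, f]\<close>, which forces \<open>[g, h] = [[g, f], [h, k]]\<close>. Hence
  commutators of boundedly supported elements of \<open>G\<^sub>0\<close> lie in \<open>G\<^sub>0''\<close>. Multiplying by
  elements commuting with the other entry, each commutator of two generators is rewritten
  as such a commutator; and since \<open>G\<^sub>0''\<close> is normal in \<open>G\<^sub>0\<close>, a normal subgroup containing
  the commutators of the generators contains all of \<open>G\<^sub>0'\<close>.\<close>

definition commutator :: "('a, 'b) monoid_scheme \<Rightarrow> 'a \<Rightarrow> 'a \<Rightarrow> 'a" where
  "commutator G x y = x \<otimes>\<^bsub>G\<^esub> y \<otimes>\<^bsub>G\<^esub> inv\<^bsub>G\<^esub> x \<otimes>\<^bsub>G\<^esub> inv\<^bsub>G\<^esub> y"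

lemma commutator_in_derived: "x \<in> H \<Longrightarrow> y \<in> H \<Longrightarrow> commutator G x y \<in> derived G H"
  unfolding derived_def commutator_def by (blast intro: generate.incl)

lemma derived_set_eq_commutators:
  "derived_set G H = {commutator G x y | x y. x \<in> H \<and> y \<in> H}"
  by (auto simp: commutator_def)

context group
begin

lemma mult_inv_cancel_left: "x \<in> carrier G \<Longrightarrow> y \<in> carrier G \<Longrightarrow> x \<otimes> (inv x \<otimes> y) = y"
  by (simp add: m_assoc[symmetric])

lemma inv_mult_cancel_left: "x \<in> carrier G \<Longrightarrow> y \<in> carrier G \<Longrightarrow> inv x \<otimes> (x \<otimes> y) = y"
  by (simp add: m_assoc[symmetric])

lemmas group_normalize = m_assoc inv_mult_group mult_inv_cancel_left inv_mult_cancel_left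

lemma commutator_closed [simp]:
  "x \<in> carrier G \<Longrightarrow> y \<in> carrier G \<Longrightarrow> commutator G x y \<in> carrier G"
  by (simp add: commutator_def)

lemma commutator_self: "x \<in> carrier G \<Longrightarrow> commutator G x x = \<one>"
  by (simp add: commutator_def group_normalize)

lemma commutator_swap:
  "x \<in> carrier G \<Longrightarrow> y \<in> carrier G \<Longrightarrow> commutator G y x = inv (commutator G x y)"
  by (simp add: commutator_def group_normalize)

lemma commutator_inv_left:
  "x \<in> carrier G \<Longrightarrow> t \<in> carrier G \<Longrightarrow>
    commutator G (inv x) t = inv x \<otimes> inv (commutator G x t) \<otimes> inv (inv x)"
  by (simp add: commutator_def group_normalize)

lemma commutator_mult_left:
  "x \<in> carrier G \<Longrightarrow> y \<in> carrier G \<Longrightarrow> t \<in> carrier G \<Longrightarrow>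
    commutator G (x \<otimes> y) t = x \<otimes> commutator G y t \<otimes> inv x \<otimes> commutator G x t"
  by (simp add: commutator_def group_normalize)

lemma commute_inv:
  assumes "v \<in> carrier G" "y \<in> carrier G" "v \<otimes> y = y \<otimes> v"
  shows "inv v \<otimes> y = y \<otimes> inv v"
proof -
  have "inv v \<otimes> y = inv v \<otimes> (y \<otimes> v) \<otimes> inv v"
    using assms(1,2) by (simp add: group_normalize)
  also have "\<dots> = inv v \<otimes> (v \<otimes> y) \<otimes> inv v"
    by (simp only: assms(3))
  also have "\<dots> = y \<otimes> inv v"
    using assms(1,2) by (simp add: group_normalize)
  finally show ?thesis .
qed

lemma commutator_mult_commuting_left:
  assumes car: "x \<in> carrier G" "y \<in> carrier G" "v \<in> carrier G" and vy: "v \<otimes> y = y \<otimes> v"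
  shows "commutator G (x \<otimes> v) y = commutator G x y"
proof -
  have conj: "v \<otimes> y \<otimes> inv v = y"
    using car by (simp add: vy m_assoc)
  have "commutator G (x \<otimes> v) y = x \<otimes> (v \<otimes> y \<otimes> inv v) \<otimes> inv x \<otimes> inv y"
    using car by (simp add: commutator_def group_normalize)
  then show ?thesis
    by (simp add: conj commutator_def)
qed

lemma commutator_mult_commuting_right:
  assumes car: "x \<in> carrier G" "y \<in> carrier G" "w \<in> carrier G" and wx: "w \<otimes> x = x \<otimes> w"
  shows "commutator G x (y \<otimes> w) = commutator G x y"
proof -
  have "w \<otimes> inv x = inv x \<otimes> w"
    using commute_inv[OF car(1,3) wx[symmetric]] by simp
  then have conj: "w \<otimes> inv x \<otimes> inv w = inv x"
    using car by (simp add: m_assoc)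
  have "commutator G x (y \<otimes> w) = x \<otimes> y \<otimes> (w \<otimes> inv x \<otimes> inv w) \<otimes> inv y"
    using car by (simp add: commutator_def group_normalize)
  then show ?thesis
    by (simp add: conj commutator_def)
qed

text \<open>Since \<open>[g, f] = g (f g f\<inverse>)\<inverse>\<close> and \<open>[h, k] = h (k h k\<inverse>)\<inverse>\<close>, the two commutation
  hypotheses allow both correction factors to be dropped.\<close>

lemma commutator_eq_commutator_of_commutators:
  assumes car: "g \<in> carrier G" "h \<in> carrier G" "f \<in> carrier G" "k \<in> carrier G"
    and comm_g: "(f \<otimes> g \<otimes> inv f) \<otimes> h = h \<otimes> (f \<otimes> g \<otimes> inv f)"
    and comm_h: "(k \<otimes> h \<otimes> inv k) \<otimes> commutator G g f = commutator G g f \<otimes> (k \<otimes> h \<otimes> inv k)"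
  shows "commutator G g h = commutator G (commutator G g f) (commutator G h k)"
proof -
  have gf: "commutator G g f = g \<otimes> inv (f \<otimes> g \<otimes> inv f)"
    using car by (simp add: commutator_def group_normalize)
  have hk: "commutator G h k = h \<otimes> inv (k \<otimes> h \<otimes> inv k)"
    using car by (simp add: commutator_def group_normalize)
  have "commutator G (commutator G g f) (commutator G h k) = commutator G (commutator G g f) h"
    unfolding hk using car
    by (intro commutator_mult_commuting_right commute_inv comm_h) simp_all
  also have "\<dots> = commutator G g h"
    unfolding gf using car
    by (intro commutator_mult_commuting_left commute_inv comm_g) simp_all
  finally show ?thesis by simp
qed

lemma commutator_generate_left:
  assumes S: "S \<subseteq> carrier G" and N: "subgroup N G"
    and conj: "\<And>x n. x \<in> generate G S \<Longrightarrow> n \<in> N \<Longrightarrow> x \<otimes> n \<otimes> inv x \<in> N"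
    and t: "t \<in> carrier G" and gens: "\<And>s. s \<in> S \<Longrightarrow> commutator G s t \<in> N"
    and x: "x \<in> generate G S"
  shows "commutator G x t \<in> N"
  using x
proof (induction x rule: generate.induct)
  case one
  show ?case using t subgroup.one_closed[OF N] by (simp add: commutator_def)
next
  case (incl s)
  then show ?case by (rule gens)
next
  case (inv s)
  have "commutator G (inv s) t = inv s \<otimes> inv (commutator G s t) \<otimes> inv (inv s)"
    using inv S t by (intro commutator_inv_left) auto
  then show ?case
    using conj[OF generate.inv[OF inv]] gens[OF inv] subgroup.m_inv_closed[OF N] by simp
next
  case (eng x y)
  have "x \<in> carrier G" "y \<in> carrier G"
    using eng.hyps generate_in_carrier[OF S] by auto
  then have "commutator G (x \<otimes> y) t = x \<otimes> commutator G y t \<otimes> inv x \<otimes> commutator G x t"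
    using t by (rule commutator_mult_left)
  then show ?case
    using conj[OF eng.hyps(1) eng.IH(2)] eng.IH(1) subgroup.m_closed[OF N] by simp
qed

lemma derived_generate_subset:
  assumes S: "S \<subseteq> carrier G" and N: "subgroup N G"
    and conj: "\<And>x n. x \<in> generate G S \<Longrightarrow> n \<in> N \<Longrightarrow> x \<otimes> n \<otimes> inv x \<in> N"
    and gens: "\<And>s t. s \<in> S \<Longrightarrow> t \<in> S \<Longrightarrow> commutator G s t \<in> N"
  shows "derived G (generate G S) \<subseteq> N"
proof -
  have gen_carrier: "generate G S \<subseteq> carrier G"
    using generate_in_carrier[OF S] by blast
  have right: "commutator G s y \<in> N" if s: "s \<in> S" and y: "y \<in> generate G S" for s y
  proof -
    have "commutator G y s \<in> N"
      using s S by (intro commutator_generate_left[OF S N conj _ gens y]) auto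
    moreover have "commutator G s y = inv (commutator G y s)"
      using s y S gen_carrier by (intro commutator_swap) auto
    ultimately show ?thesis
      using subgroup.m_inv_closed[OF N] by simp
  qed
  have "derived_set G (generate G S) \<subseteq> N"
    unfolding derived_set_eq_commutators
    using gen_carrier by (auto intro!: commutator_generate_left[OF S N conj _ right])
  then show ?thesis
    unfolding derived_def by (rule generate_subgroup_incl[OF _ N])
qed

lemma second_derived_normal_in_subgroup:
  assumes H: "subgroup H G"
  shows "derived G (derived G H) \<lhd> G\<lparr>carrier := H\<rparr>"
proof -
  interpret K: group "G\<lparr>carrier := H\<rparr>"
    by (rule subgroup_imp_group[OF H])
  have derived_H: "derived G H = derived (G\<lparr>carrier := H\<rparr>) H"
    using derived_consistent[OF subset_refl H] by simp
  have "derived G H \<subseteq> H"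
    by (rule derived_incl[OF subset_refl H])
  then have "derived G (derived G H) = derived (G\<lparr>carrier := H\<rparr>) (derived G H)"
    using derived_consistent[OF _ H] by simp
  then show ?thesis
    using K.derived_is_normal[OF K.derived_self_is_normal] derived_H by simp
qed

theorem derived_eq_second_derived_if_generator_commutators:
  assumes S: "S \<subseteq> carrier G"
    and gens: "\<And>s t. s \<in> S \<Longrightarrow> t \<in> S \<Longrightarrow>
      commutator G s t \<in> derived G (derived G (generate G S))"
  shows "derived G (generate G S) = derived G (derived G (generate G S))"
proof
  let ?H = "generate G S"
  have H: "subgroup ?H G"
    by (rule generate_is_subgroup[OF S])
  have H': "subgroup (derived G ?H) G"
    by (rule derived_is_subgroup[OF subgroup.subset[OF H]])
  have H'': "subgroup (derived G (derived G ?H)) G"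
    by (rule derived_is_subgroup[OF subgroup.subset[OF H']])
  interpret N: normal "derived G (derived G ?H)" "G\<lparr>carrier := ?H\<rparr>"
    by (rule second_derived_normal_in_subgroup[OF H])
  have conj: "x \<otimes> n \<otimes> inv x \<in> derived G (derived G ?H)"
    if "x \<in> ?H" "n \<in> derived G (derived G ?H)" for x n
    using N.inv_op_closed2[of x n] that H by simp
  show "derived G ?H \<subseteq> derived G (derived G ?H)"
    by (rule derived_generate_subset[OF S H'' conj gens])
  show "derived G (derived G ?H) \<subseteq> derived G ?H"
    by (rule derived_incl[OF subset_refl H'])
qed

end

definition moved :: "('a \<Rightarrow> 'a) \<Rightarrow> 'a set" where
  "moved f = {x. f x \<noteq> x}"

lemma moved_subset_iff: "moved f \<subseteq> A \<longleftrightarrow> (\<forall>x. x \<notin> A \<longrightarrow> f x = x)"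
  by (auto simp: moved_def)

lemma moved_closed: "inj f \<Longrightarrow> x \<in> moved f \<Longrightarrow> f x \<in> moved f"
  by (auto simp: moved_def dest: injD)

lemma comp_commute_if_moved_disjoint:
  assumes "inj f" "inj g" "moved f \<inter> moved g = {}"
  shows "f \<circ> g = g \<circ> f"
proof
  fix x
  show "(f \<circ> g) x = (g \<circ> f) x"
    using moved_closed[OF assms(1), of x] moved_closed[OF assms(2), of x] assms(3)
    by (cases "x \<in> moved f"; cases "x \<in> moved g") (auto simp: moved_def)
qed

lemma carrier_PermR: "carrier PermR = {f. bij f}"
  by (auto simp: BijGroup_def Bij_def extensional_def)

lemma mult_PermR: "f \<in> carrier PermR \<Longrightarrow> g \<in> carrier PermR \<Longrightarrow> f \<otimes>\<^bsub>PermR\<^esub> g = f \<circ> g"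
  by (auto simp: BijGroup_def compose_def Bij_def extensional_def)

lemma inv_PermR: "f \<in> carrier PermR \<Longrightarrow> inv\<^bsub>PermR\<^esub> f = inv_into UNIV f"
proof -
  assume "f \<in> carrier PermR"
  then have "f \<in> Bij UNIV"
    by (simp add: BijGroup_def)
  then show ?thesis
    by (simp add: inv_BijGroup restrict_def)
qed

lemma one_PermR: "\<one>\<^bsub>PermR\<^esub> = id"
  by (auto simp: BijGroup_def)

interpretation PermR: group PermR
  by (rule group_BijGroup)

abbreviation perm_mult :: "(real \<Rightarrow> real) \<Rightarrow> (real \<Rightarrow> real) \<Rightarrow> real \<Rightarrow> real" (infixl "\<star>" 70)
  where "f \<star> g \<equiv> f \<otimes>\<^bsub>PermR\<^esub> g"

abbreviation perm_inv :: "(real \<Rightarrow> real) \<Rightarrow> real \<Rightarrow> real"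
  where "perm_inv f \<equiv> inv\<^bsub>PermR\<^esub> f"

lemma perm_mult_apply [simp]:
  "f \<in> carrier PermR \<Longrightarrow> g \<in> carrier PermR \<Longrightarrow> (f \<star> g) t = f (g t)"
  by (simp add: mult_PermR)

lemma perm_apply_perm_inv [simp]: "f \<in> carrier PermR \<Longrightarrow> f (perm_inv f t) = t"
  by (simp add: inv_PermR carrier_PermR bij_is_surj f_inv_into_f)

lemma perm_inv_apply_eqI: "f \<in> carrier PermR \<Longrightarrow> f s = t \<Longrightarrow> perm_inv f t = s"
  by (auto simp: inv_PermR carrier_PermR bij_def intro: inv_into_f_eq)

lemma perm_commute_if_moved_disjoint:
  "f \<in> carrier PermR \<Longrightarrow> g \<in> carrier PermR \<Longrightarrow> moved f \<inter> moved g = {} \<Longrightarrow> f \<star> g = g \<star> f"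
  by (auto simp: mult_PermR carrier_PermR intro!: comp_commute_if_moved_disjoint bij_is_inj)

lemma moved_perm_mult:
  "f \<in> carrier PermR \<Longrightarrow> g \<in> carrier PermR \<Longrightarrow> moved (f \<star> g) \<subseteq> moved f \<union> moved g"
  by (auto simp: moved_def)

lemma moved_perm_inv:
  assumes "f \<in> carrier PermR"
  shows "moved (perm_inv f) = moved f"
proof -
  have "perm_inv f x = x \<longleftrightarrow> f x = x" for x
    using assms perm_apply_perm_inv[OF assms, of x] perm_inv_apply_eqI[OF assms, of x x] by metis
  then show ?thesis
    by (simp add: moved_def)
qed

abbreviation shift :: "nat \<Rightarrow> real \<Rightarrow> real"
  where "shift n \<equiv> gen_a [^]\<^bsub>PermR\<^esub> n"

lemma bij_gen_a: "bij gen_a"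
  by (rule o_bij[of "\<lambda>t. t - 1"]) (auto simp: gen_a_def)

lemma gen_a_carrier [simp]: "gen_a \<in> carrier PermR"
  using bij_gen_a by (simp add: carrier_PermR)

lemma shift_apply [simp]: "shift n t = t + real n"
proof (induction n arbitrary: t)
  case 0
  then show ?case by (simp add: one_PermR)
next
  case (Suc n)
  have "shift (Suc n) t = shift n (gen_a t)"
    by simp
  also have "\<dots> = t + real (Suc n)"
    by (simp add: Suc.IH gen_a_def)
  finally show ?case .
qed

lemma perm_inv_shift_apply [simp]: "perm_inv (shift n) t = t - real n"
  by (rule perm_inv_apply_eqI) simp_all

lemma perm_inv_gen_a_apply [simp]: "perm_inv gen_a t = t - 1"
  by (rule perm_inv_apply_eqI) (simp_all add: gen_a_def)

lemma moved_shift_conj: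
  assumes "f \<in> carrier PermR" "moved f \<subseteq> {p..q}"
  shows "moved (shift n \<star> f \<star> perm_inv (shift n)) \<subseteq> {p + real n..q + real n}"
  using assms by (auto simp: moved_subset_iff)

lemma shift_in_subgroup: "subgroup H PermR \<Longrightarrow> gen_a \<in> H \<Longrightarrow> shift n \<in> H"
  by (induction n) (auto simp: subgroup.one_closed subgroup.m_closed)

lemma commutator_in_second_derived_if_bounded_support:
  assumes H: "subgroup H PermR" "gen_a \<in> H"
    and g: "g \<in> H" "moved g \<subseteq> {p..q}" and h: "h \<in> H" "moved h \<subseteq> {p..q}"
  shows "commutator PermR g h \<in> derived PermR (derived PermR H)"
proof -
  obtain d :: nat where d: "q - p < real d"
    using reals_Archimedean2 by blast
  define f k where "f = shift d" and "k = shift (2 * d)"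
  have f_H: "f \<in> H" and k_H: "k \<in> H"
    unfolding f_def k_def using shift_in_subgroup[OF H] by simp_all
  have car: "g \<in> carrier PermR" "h \<in> carrier PermR" "f \<in> carrier PermR" "k \<in> carrier PermR"
    using g(1) h(1) f_H k_H subgroup.mem_carrier[OF H(1)] by auto
  have moved_fg: "moved (f \<star> g \<star> perm_inv f) \<subseteq> {p + real d..q + real d}"
    unfolding f_def using car(1) g(2) by (rule moved_shift_conj)
  have comm_g: "(f \<star> g \<star> perm_inv f) \<star> h = h \<star> (f \<star> g \<star> perm_inv f)"
    using moved_fg h(2) d car by (intro perm_commute_if_moved_disjoint) fastforce+
  have "commutator PermR g f = g \<star> perm_inv (f \<star> g \<star> perm_inv f)"
    using car by (simp add: commutator_def PermR.group_normalize)
  then have "moved (commutator PermR g f) \<subseteq> moved g \<union> moved (perm_inv (f \<star> g \<star> perm_inv f))"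
    using car by (simp add: moved_perm_mult)
  also have "\<dots> = moved g \<union> moved (f \<star> g \<star> perm_inv f)"
    using car by (simp add: moved_perm_inv)
  also have "\<dots> \<subseteq> {p..q + real d}"
    using g(2) moved_fg d by fastforce
  finally have moved_gf: "moved (commutator PermR g f) \<subseteq> {p..q + real d}" .
  have moved_kh: "moved (k \<star> h \<star> perm_inv k) \<subseteq> {p + real (2 * d)..q + real (2 * d)}"
    unfolding k_def using car(2) h(2) by (rule moved_shift_conj)
  have comm_h: "(k \<star> h \<star> perm_inv k) \<star> commutator PermR g f = commutator PermR g f \<star> (k \<star> h \<star> perm_inv k)"
    using moved_kh moved_gf d car by (intro perm_commute_if_moved_disjoint) fastforce+
  have "commutator PermR g h = commutator PermR (commutator PermR g f) (commutator PermR h k)"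
    using car comm_g comm_h by (rule PermR.commutator_eq_commutator_of_commutators)
  then show ?thesis
    using g h f_H k_H by (simp add: commutator_in_derived)
qed

definition gen_b_inv :: "real \<Rightarrow> real" where
  "gen_b_inv s =
    (if s \<le> 0 then s else if s \<le> 1 then s / (1 + s) else if s \<le> 2 then 1 / (3 - s) else s - 1)"

lemma gen_b_gen_b_inv: "gen_b (gen_b_inv s) = s"
proof -
  consider "s \<le> 0" | "0 < s" "s \<le> 1" | "1 < s" "s \<le> 2" | "2 < s"
    by linarith
  then show ?thesis
  proof cases
    case 2
    then have "0 < s / (1 + s)" "s / (1 + s) \<le> 1/2"
      by (simp_all add: field_simps)
    with 2 show ?thesis
      by (simp add: gen_b_inv_def gen_b_def field_simps)
  next
    case 3
    then have "1/2 < 1 / (3 - s)" "1 / (3 - s) \<le> 1"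
      by (simp_all add: field_simps)
    with 3 show ?thesis
      by (simp add: gen_b_inv_def gen_b_def field_simps)
  qed (auto simp: gen_b_inv_def gen_b_def)
qed

lemma gen_b_inv_gen_b: "gen_b_inv (gen_b t) = t"
proof -
  consider "t \<le> 0" | "0 < t" "t \<le> 1/2" | "1/2 < t" "t \<le> 1" | "1 < t"
    by linarith
  then show ?thesis
  proof cases
    case 2
    then have "0 < t / (1 - t)" "t / (1 - t) \<le> 1"
      by (simp_all add: field_simps)
    with 2 show ?thesis
      by (simp add: gen_b_inv_def gen_b_def field_simps)
  next
    case 3
    then have "1 < (3 * t - 1) / t" "(3 * t - 1) / t \<le> 2"
      by (simp_all add: field_simps)
    with 3 show ?thesis
      by (simp add: gen_b_inv_def gen_b_def field_simps)
  qed (auto simp: gen_b_inv_def gen_b_def)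
qed

lemma bij_gen_b: "bij gen_b"
  by (rule o_bij[of gen_b_inv]) (auto simp: gen_b_gen_b_inv gen_b_inv_gen_b)

definition gen_c_inv :: "real \<Rightarrow> real" where
  "gen_c_inv s = (if 0 \<le> s \<and> s \<le> 1 then s / (2 - s) else s)"

lemma bij_gen_c: "bij gen_c"
proof (rule o_bij[of gen_c_inv])
  have "gen_c_inv (gen_c t) = t" for t
  proof (cases "0 \<le> t \<and> t \<le> 1")
    case True
    then have "2 * t / (t + 1) \<le> 1"
      by (simp add: field_simps)
    with True show ?thesis
      by (simp add: gen_c_inv_def gen_c_def field_simps)
  qed (auto simp: gen_c_inv_def gen_c_def)
  then show "gen_c_inv \<circ> gen_c = id"
    by auto
  have "gen_c (gen_c_inv t) = t" for t
  proof (cases "0 \<le> t \<and> t \<le> 1")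
    case True
    then have "t / (2 - t) \<le> 1"
      by (simp add: field_simps)
    with True show ?thesis
      by (simp add: gen_c_inv_def gen_c_def field_simps)
  qed (auto simp: gen_c_inv_def gen_c_def)
  then show "gen_c \<circ> gen_c_inv = id"
    by auto
qed

lemma gen_b_gen_c_carrier [simp]: "gen_b \<in> carrier PermR" "gen_c \<in> carrier PermR"
  using bij_gen_b bij_gen_c by (auto simp: carrier_PermR)

lemma perm_inv_gen_b_apply [simp]: "perm_inv gen_b t = gen_b_inv t"
  by (rule perm_inv_apply_eqI) (simp_all add: gen_b_gen_b_inv)

lemma gen_b_nonpos: "t \<le> 0 \<Longrightarrow> gen_b t = t"
  by (simp add: gen_b_def)

lemma gen_b_ge_1: "1 \<le> t \<Longrightarrow> gen_b t = t + 1"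
  by (auto simp: gen_b_def field_simps)

lemma gen_b_inv_nonpos: "t \<le> 0 \<Longrightarrow> gen_b_inv t = t"
  by (simp add: gen_b_inv_def)

lemma gen_b_inv_ge_2: "2 \<le> t \<Longrightarrow> gen_b_inv t = t - 1"
  by (auto simp: gen_b_inv_def)

lemmas gen_b_outside = gen_b_nonpos gen_b_ge_1 gen_b_inv_nonpos gen_b_inv_ge_2

lemma subgroup_G0: "subgroup G0 PermR"
  unfolding G0_def by (rule PermR.generate_is_subgroup) simp

lemma gens_in_G0: "gen_a \<in> G0" "gen_b \<in> G0" "gen_c \<in> G0"
  unfolding G0_def by (auto intro: generate.incl)

lemma G0_closed:
  "x \<in> G0 \<Longrightarrow> y \<in> G0 \<Longrightarrow> x \<star> y \<in> G0" "x \<in> G0 \<Longrightarrow> perm_inv x \<in> G0" "shift n \<in> G0"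
  using subgroup.m_closed[OF subgroup_G0] subgroup.m_inv_closed[OF subgroup_G0]
    shift_in_subgroup[OF subgroup_G0 gens_in_G0(1)] by auto

lemmas G0_intros = gens_in_G0 G0_closed

lemma moved_gen_b: "moved gen_b \<subseteq> {0<..}"
  by (auto simp: moved_subset_iff gen_b_nonpos)

lemma moved_gen_c: "moved gen_c \<subseteq> {0<..<1}"
  by (auto simp: moved_subset_iff gen_c_def)

lemma commutator_gen_b_gen_c: "commutator PermR gen_b gen_c \<in> derived PermR (derived PermR G0)"
proof -
  \<comment> \<open>a translate of \<open>b\<inverse>\<close>: it fixes the support of \<open>c\<close> and undoes \<open>b\<close> near \<open>+\<infinity>\<close>\<close>
  define u where "u = gen_a \<star> perm_inv gen_b \<star> perm_inv gen_a"
  have u_car: "u \<in> carrier PermR" and u_apply: "u t = gen_b_inv (t - 1) + 1" for t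
    unfolding u_def by (simp_all add: gen_a_def)
  have "moved u \<subseteq> {1<..}"
    by (auto simp: moved_subset_iff u_apply gen_b_inv_nonpos)
  then have "u \<star> gen_c = gen_c \<star> u"
    using moved_gen_c u_car by (intro perm_commute_if_moved_disjoint) fastforce+
  then have "commutator PermR gen_b gen_c = commutator PermR (gen_b \<star> u) gen_c"
    using u_car by (simp add: PermR.commutator_mult_commuting_left)
  moreover have "moved (gen_b \<star> u) \<subseteq> {0..3}"
    using u_car by (auto simp: moved_subset_iff u_apply gen_b_outside)
  ultimately show ?thesis
    using moved_gen_c subgroup_G0
    by (auto simp: u_def G0_intros intro!: commutator_in_second_derived_if_bounded_support)
qed

lemma commutator_gen_a_gen_c: "commutator PermR gen_a gen_c \<in> derived PermR (derived PermR G0)"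
proof -
  \<comment> \<open>\<open>z\<close> agrees with \<open>a\<close> on \<open>[0, 1]\<close> and is the identity outside \<open>[-2, 4]\<close>\<close>
  define z where "z = shift 2 \<star> perm_inv gen_b \<star> perm_inv (shift 4) \<star> gen_b \<star> shift 2"
  define u where "u = perm_inv gen_a \<star> z"
  have z_car: "z \<in> carrier PermR" and z_apply: "z t = gen_b_inv (gen_b (t + 2) - 4) + 2" for t
    unfolding z_def by simp_all
  have u_car: "u \<in> carrier PermR" and u_apply: "u t = z t - 1" for t
    unfolding u_def using z_car by simp_all
  have "moved u \<subseteq> - {0..1}"
    by (auto simp: moved_subset_iff u_apply z_apply gen_b_outside)
  then have "u \<star> gen_c = gen_c \<star> u"
    using moved_gen_c u_car by (intro perm_commute_if_moved_disjoint) fastforce+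
  then have "commutator PermR gen_a gen_c = commutator PermR (gen_a \<star> u) gen_c"
    using u_car by (simp add: PermR.commutator_mult_commuting_left)
  also have "gen_a \<star> u = z"
    unfolding u_def using z_car by (simp add: PermR.mult_inv_cancel_left)
  finally have "commutator PermR gen_a gen_c = commutator PermR z gen_c" .
  moreover have "moved z \<subseteq> {-2..4}"
    by (auto simp: moved_subset_iff z_apply gen_b_outside)
  ultimately show ?thesis
    using moved_gen_c subgroup_G0
    by (auto simp: z_def G0_intros intro!: commutator_in_second_derived_if_bounded_support)
qed

lemma commutator_gen_a_gen_b: "commutator PermR gen_a gen_b \<in> derived PermR (derived PermR G0)"
proof -
  \<comment> \<open>\<open>a v\<close> is a translate of \<open>b\<close>, so \<open>x = a v b\<inverse>\<close> has bounded support; symmetrically \<open>w\<close>,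
    a translate of \<open>b\<inverse>\<close>, gives \<open>b w\<close> bounded support\<close>
  define v where "v = perm_inv gen_a \<star> perm_inv (shift 2) \<star> gen_b \<star> shift 2"
  have v_car: "v \<in> carrier PermR" and v_apply: "v t = gen_b (t + 2) - 3" for t
    unfolding v_def by simp_all
  have "moved v \<subseteq> {..<-1}"
    by (auto simp: moved_subset_iff v_apply gen_b_outside)
  then have "v \<star> gen_b = gen_b \<star> v"
    using moved_gen_b v_car by (intro perm_commute_if_moved_disjoint) fastforce+
  define x where "x = gen_a \<star> v \<star> perm_inv gen_b"
  have x_car: "x \<in> carrier PermR" and x_apply: "x t = gen_b (gen_b_inv t + 2) - 2" for t
    unfolding x_def using v_car by (simp_all add: v_apply gen_a_def)
  define w where "w = shift 2 \<star> perm_inv gen_b \<star> perm_inv (shift 2)"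
  have w_car: "w \<in> carrier PermR" and w_apply: "w t = gen_b_inv (t - 2) + 2" for t
    unfolding w_def by simp_all
  have "moved x \<subseteq> {-2..2}"
    by (auto simp: moved_subset_iff x_apply gen_b_outside)
  moreover have "moved w \<subseteq> {2<..}"
    by (auto simp: moved_subset_iff w_apply gen_b_outside)
  ultimately have "w \<star> x = x \<star> w"
    using w_car x_car by (intro perm_commute_if_moved_disjoint) fastforce+
  have "commutator PermR gen_a gen_b = commutator PermR x gen_b"
    unfolding x_def using v_car \<open>v \<star> gen_b = gen_b \<star> v\<close>
    by (simp add: PermR.commutator_mult_commuting_left)
  also have "\<dots> = commutator PermR x (gen_b \<star> w)"
    using x_car w_car \<open>w \<star> x = x \<star> w\<close> by (simp add: PermR.commutator_mult_commuting_right)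
  finally have eq: "commutator PermR gen_a gen_b = commutator PermR x (gen_b \<star> w)" .
  have "moved x \<subseteq> {-2..4}"
    by (auto simp: moved_subset_iff x_apply gen_b_outside)
  moreover have "moved (gen_b \<star> w) \<subseteq> {-2..4}"
    using w_car by (auto simp: moved_subset_iff w_apply gen_b_outside)
  ultimately show ?thesis
    unfolding eq using subgroup_G0
    by (auto simp: x_def v_def w_def G0_intros intro!: commutator_in_second_derived_if_bounded_support)
qed

lemma commutator_generators:
  assumes "s \<in> {gen_a, gen_b, gen_c}" "t \<in> {gen_a, gen_b, gen_c}"
  shows "commutator PermR s t \<in> derived PermR (derived PermR G0)"
proof -
  have N: "subgroup (derived PermR (derived PermR G0)) PermR"
    using subgroup.subset[OF subgroup_G0] by (intro PermR.derived_is_subgroup PermR.derived_in_carrier)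
  have swap: "commutator PermR t s \<in> derived PermR (derived PermR G0)"
    if "commutator PermR s t \<in> derived PermR (derived PermR G0)"
      "s \<in> carrier PermR" "t \<in> carrier PermR" for s t
    using that PermR.commutator_swap subgroup.m_inv_closed[OF N] by metis
  show ?thesis
    using assms commutator_gen_a_gen_b commutator_gen_a_gen_c commutator_gen_b_gen_c
      PermR.commutator_self subgroup.one_closed[OF N]
    by (auto intro: swap)
qed

theorem mainTheorem5:
  shows "derived PermR G0 = derived PermR (derived PermR G0)"
  unfolding G0_def
  by (rule PermR.derived_eq_second_derived_if_generator_commutators)
    (use commutator_generators[unfolded G0_def] in auto)

end
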